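(* For every nonnegative integer $n$, $$\sum_{k=0}^{\infty}(-1)^k(4k+1)\,\frac{(-n)_k\,(-3n-1)_k\,(\tfrac12)_k}{k!\,(n+\tfrac32)_k\,(3n+\tfrac52)_k}=\left(\frac{3^3}{2^8}\right)^n\frac{(\tfrac76)_n(\tfrac56)_n(\tfrac32)_n^2}{(\tfrac58)_n(\tfrac78)_n(\tfrac98)_n(\tfrac{11}{8})_n}.$$ (The sum is finite, since $(-n)_k=0$ for $k>n$.)
   Context: $(a)_j=\Gamma(a+j)/\Gamma(a)=a(a+1)\cdots(a+j-1)$ denotes the rising factorial (Pochhammer symbol), with $(a)_0=1$. *)

theory Defs
  imports "HOL-Analysis.Analysis"
begin

end

theory Submission
  imports Defs
begin

(* Proof by the Wilf-Zeilberger method.  Write T(x,k) for the summand with the integer n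
   replaced by a real parameter x >= 0, and B(x,k) = T(x+1,k)/(4k+1) for the associated
   "base" hypergeometric term.  With the polynomial certificate G(x,k) = R(x,k) B(x,k) one has
     a(x) T(x+1,k) - b(x) T(x,k) = G(x,k+1) - G(x,k),
   where a(x)/b(x) is the ratio of consecutive values of the right-hand side.  Because
   G(n,0) = 0 and G(n,k) = 0 for k >= n+2, summing over k telescopes to
     a(n) * (sum_k T(n+1,k)) = b(n) * (sum_k T(n,k)),
   and the closed form satisfies the same first-order recurrence; induction on n finishes. *)

lemma pochhammer_shift:
  fixes a :: "'a::comm_semiring_1"
  assumes "b = a + 1"
  shows "a * pochhammer b k = (a + of_nat k) * pochhammer a k"
  using assms by (metis pochhammer_rec pochhammer_rec')

lemma pochhammer_shift3:
  fixes a :: "'a::comm_semiring_1"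
  assumes "b = a + 3"
  shows "a * (a + 1) * (a + 2) * pochhammer b k
       = (a + of_nat k) * (a + 1 + of_nat k) * (a + 2 + of_nat k) * pochhammer a k"
proof -
  have s2: "(a + 2) * pochhammer b k = (a + 2 + of_nat k) * pochhammer (a + 2) k"
    by (rule pochhammer_shift) (simp add: assms add.assoc)
  have s1: "(a + 1) * pochhammer (a + 2) k = (a + 1 + of_nat k) * pochhammer (a + 1) k"
    by (rule pochhammer_shift) (simp add: add.assoc one_add_one)
  have s0: "a * pochhammer (a + 1) k = (a + of_nat k) * pochhammer a k"
    by (rule pochhammer_shift) simp
  have "a * (a + 1) * (a + 2) * pochhammer b k = a * (a + 1) * ((a + 2) * pochhammer b k)"
    by (simp only: mult.assoc)
  also have "\<dots> = (a + 2 + of_nat k) * a * ((a + 1) * pochhammer (a + 2) k)"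
    unfolding s2 by (simp only: mult_ac)
  also have "\<dots> = (a + 2 + of_nat k) * (a + 1 + of_nat k) * (a * pochhammer (a + 1) k)"
    unfolding s1 by (simp only: mult_ac)
  also have "\<dots> = (a + of_nat k) * (a + 1 + of_nat k) * (a + 2 + of_nat k) * pochhammer a k"
    unfolding s0 by (simp only: mult_ac)
  finally show ?thesis .
qed

definition wz_term :: "real \<Rightarrow> nat \<Rightarrow> real" where
  "wz_term x k = (-1) ^ k * (4 * real k + 1) *
     (pochhammer (- x) k * pochhammer (- 3 * x - 1) k * pochhammer (1/2) k)
     / (fact k * pochhammer (x + 3/2) k * pochhammer (3 * x + 5/2) k)"

definition wz_base :: "real \<Rightarrow> nat \<Rightarrow> real" where
  "wz_base x k = (-1) ^ k *
     (pochhammer (- x - 1) k * pochhammer (- 3 * x - 4) k * pochhammer (1/2) k)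
     / (fact k * pochhammer (x + 5/2) k * pochhammer (3 * x + 11/2) k)"

lemma wz_term_shift: "wz_term (x + 1) k = (4 * real k + 1) * wz_base x k"
proof -
  have "- (x + 1) = - x - 1" "- 3 * (x + 1) - 1 = - 3 * x - 4"
       "x + 1 + 3/2 = x + 5/2" "3 * (x + 1) + 5/2 = 3 * x + 11/2"
    by simp_all
  then show ?thesis unfolding wz_term_def wz_base_def by (simp only:) simp
qed

(* Coefficients of the recurrence a(x) S(x+1) = b(x) S(x) satisfied by the sums;
   their quotient b(x)/a(x) is the ratio of consecutive values of the closed form. *)
definition rec_next :: "real \<Rightarrow> real" where
  "rec_next x = 3 * (8*x+5) * (8*x+7) * (8*x+9) * (8*x+11) * (x+1)^2 * (3*x+2) * (3*x+4)"

definition rec_curr :: "real \<Rightarrow> real" where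
  "rec_curr x = 9 * (6*x+7) * (6*x+5) * (2*x+3)^2 * (x+1)^2 * (3*x+2) * (3*x+4)"

(* The four pochhammer shifts relating the parameters of the summand and of the base term,
   multiplied together; this identity is free of denominators. *)
lemma wz_pochhammer_cross:
  fixes x :: real
  shows "rec_curr x * pochhammer (- x) k * pochhammer (- 3 * x - 1) k
        * pochhammer (x + 5/2) k * pochhammer (3 * x + 11/2) k
      = (k-x-1) * (k-3*x-4) * (k-3*x-3) * (k-3*x-2)
        * (2*real k+2*x+3) * (2*real k+6*x+5) * (2*real k+6*x+7) * (2*real k+6*x+9)
        * pochhammer (- x - 1) k * pochhammer (- 3 * x - 4) k
        * pochhammer (x + 3/2) k * pochhammer (3 * x + 5/2) k"
proof -
  have num1: "(- x - 1) * pochhammer (- x) k = (k - x - 1) * pochhammer (- x - 1) k"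
    using pochhammer_shift[of "- x" "- x - 1" k] by simp
  have num2: "(- 3*x - 4) * (- 3*x - 3) * (- 3*x - 2) * pochhammer (- 3 * x - 1) k
      = (k - 3*x - 4) * (k - 3*x - 3) * (k - 3*x - 2) * pochhammer (- 3 * x - 4) k"
    using pochhammer_shift3[of "- 3 * x - 1" "- 3 * x - 4" k] by (simp add: algebra_simps)
  have den1: "(x + 3/2) * pochhammer (x + 5/2) k = (x + 3/2 + k) * pochhammer (x + 3/2) k"
    using pochhammer_shift[of "x + 5/2" "x + 3/2" k] by simp
  have den2: "(3*x + 5/2) * (3*x + 7/2) * (3*x + 9/2) * pochhammer (3 * x + 11/2) k
      = (3*x + 5/2 + k) * (3*x + 7/2 + k) * (3*x + 9/2 + k) * pochhammer (3 * x + 5/2) k"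
    using pochhammer_shift3[of "3 * x + 11/2" "3 * x + 5/2" k] by (simp add: algebra_simps)
  have "rec_curr x * pochhammer (- x) k * pochhammer (- 3 * x - 1) k
        * pochhammer (x + 5/2) k * pochhammer (3 * x + 11/2) k
      = 16 * (((- x - 1) * pochhammer (- x) k)
        * ((- 3*x - 4) * (- 3*x - 3) * (- 3*x - 2) * pochhammer (- 3 * x - 1) k)
        * ((x + 3/2) * pochhammer (x + 5/2) k)
        * ((3*x + 5/2) * (3*x + 7/2) * (3*x + 9/2) * pochhammer (3 * x + 11/2) k))"
    unfolding rec_curr_def by algebra
  also have "\<dots> = 16 * (((k - x - 1) * pochhammer (- x - 1) k)
        * ((k - 3*x - 4) * (k - 3*x - 3) * (k - 3*x - 2) * pochhammer (- 3 * x - 4) k)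
        * ((x + 3/2 + k) * pochhammer (x + 3/2) k)
        * ((3*x + 5/2 + k) * (3*x + 7/2 + k) * (3*x + 9/2 + k) * pochhammer (3 * x + 5/2) k))"
    by (simp only: num1 num2 den1 den2)
  finally show ?thesis by algebra
qed

lemma wz_term_via_base:
  fixes x :: real
  assumes "x \<ge> 0"
  shows "rec_curr x * wz_term x k =
    (4*real k+1) * (k-x-1) * (k-3*x-4) * (k-3*x-3) * (k-3*x-2)
      * (2*real k+2*x+3) * (2*real k+6*x+5) * (2*real k+6*x+7) * (2*real k+6*x+9) * wz_base x k"
proof -
  have pos: "pochhammer (x + 3/2) k > 0" "pochhammer (3 * x + 5/2) k > 0"
    "pochhammer (x + 5/2) k > 0" "pochhammer (3 * x + 11/2) k > 0"
    using assms by (auto intro!: pochhammer_pos)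
  define denom where "denom = fact k * pochhammer (x + 3/2) k * pochhammer (3 * x + 5/2) k
    * pochhammer (x + 5/2) k * pochhammer (3 * x + 11/2) k"
  have term_eq: "wz_term x k * denom = (-1) ^ k * (4 * real k + 1) * pochhammer (1/2) k
      * pochhammer (- x) k * pochhammer (- 3 * x - 1) k
      * pochhammer (x + 5/2) k * pochhammer (3 * x + 11/2) k"
    unfolding wz_term_def denom_def using pos by simp
  have base_eq: "wz_base x k * denom = (-1) ^ k * pochhammer (1/2) k
      * pochhammer (- x - 1) k * pochhammer (- 3 * x - 4) k
      * pochhammer (x + 3/2) k * pochhammer (3 * x + 5/2) k"
    unfolding wz_base_def denom_def using pos by simp
  have "rec_curr x * wz_term x k * denom = (-1) ^ k * (4 * real k + 1) * pochhammer (1/2) k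
      * (rec_curr x * pochhammer (- x) k * pochhammer (- 3 * x - 1) k
        * pochhammer (x + 5/2) k * pochhammer (3 * x + 11/2) k)"
    unfolding mult.assoc[of _ _ denom] term_eq by (simp only: mult_ac)
  also have "\<dots> = (4*real k+1) * (k-x-1) * (k-3*x-4) * (k-3*x-3) * (k-3*x-2)
      * (2*real k+2*x+3) * (2*real k+6*x+5) * (2*real k+6*x+7) * (2*real k+6*x+9)
      * wz_base x k * denom"
    unfolding wz_pochhammer_cross mult.assoc[of _ _ denom] base_eq by (simp only: mult_ac)
  finally show ?thesis
    using pos by (simp add: denom_def)
qed

lemma wz_base_Suc:
  fixes x :: real
  assumes "x \<ge> 0"
  shows "(real k + 1) * (2*real k+2*x+5) * (2*real k+6*x+11) * wz_base x (Suc k)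
       = - 2 * (real k-x-1) * (real k-3*x-4) * (2*real k+1) * wz_base x k"
proof -
  have pos: "pochhammer (x + 5/2) k > 0" "pochhammer (3 * x + 11/2) k > 0"
    using assms by (auto intro!: pochhammer_pos)
  have "x + 5/2 + real k > 0" "3 * x + 11/2 + real k > 0"
    using assms by linarith+
  then show ?thesis
    unfolding wz_base_def pochhammer_rec' fact_Suc power_Suc using pos
    by (simp add: divide_simps) algebra
qed

definition wz_cert_poly :: "real \<Rightarrow> real \<Rightarrow> real" where
  "wz_cert_poly x k =
     (-33880 - 235096*x - 670088*x^2 - 1004504*x^3 - 835632*x^4 - 365952*x^5 - 65952*x^6)
   + (-3852 - 17144*x - 28552*x^2 - 21056*x^3 - 5808*x^4) * k
   + (7488 + 33840*x + 56856*x^2 + 42112*x^3 + 11616*x^4) * k^2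
   + (860 + 1792*x + 992*x^2) * k^3
   + (-840 - 1792*x - 992*x^2) * k^4
   - 48 * k^5 + 32 * k^6"

definition wz_cert :: "real \<Rightarrow> nat \<Rightarrow> real" where
  "wz_cert x k = real k * (2*real k+2*x+3) * (2*real k+6*x+9) * wz_cert_poly x (real k) / 4
     * wz_base x k"

(* The polynomial identity behind the WZ recurrence, after dividing by the base term. *)
lemma wz_cert_identity:
  fixes x k :: real
  shows "rec_next x * (4*k+1)
       - (4*k+1) * (k-x-1) * (k-3*x-4) * (k-3*x-3) * (k-3*x-2)
         * (2*k+2*x+3) * (2*k+6*x+5) * (2*k+6*x+7) * (2*k+6*x+9)
     = - (k-x-1) * (k-3*x-4) * (2*k+1) * wz_cert_poly x (k+1) / 2
       - k * (2*k+2*x+3) * (2*k+6*x+9) * wz_cert_poly x k / 4"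
  unfolding rec_next_def wz_cert_poly_def by algebra

lemma wz_cert_Suc:
  fixes x :: real
  assumes "x \<ge> 0"
  shows "wz_cert x (Suc k)
       = - (real k-x-1) * (real k-3*x-4) * (2*real k+1) * wz_cert_poly x (real k + 1) / 2
         * wz_base x k"
proof -
  have "wz_cert x (Suc k) = ((real k + 1) * (2*real k+2*x+5) * (2*real k+6*x+11) * wz_base x (Suc k))
      * wz_cert_poly x (real k + 1) / 4"
    unfolding wz_cert_def by (simp add: algebra_simps)
  then show ?thesis
    unfolding wz_base_Suc[OF assms] by algebra
qed

lemma wz_recurrence:
  fixes x :: real
  assumes "x \<ge> 0"
  shows "rec_next x * wz_term (x + 1) k - rec_curr x * wz_term x k
       = wz_cert x (Suc k) - wz_cert x k"
proof -
  have "rec_next x * wz_term (x + 1) k - rec_curr x * wz_term x k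
      = (rec_next x * (4*real k+1)
         - (4*real k+1) * (real k-x-1) * (real k-3*x-4) * (real k-3*x-3) * (real k-3*x-2)
           * (2*real k+2*x+3) * (2*real k+6*x+5) * (2*real k+6*x+7) * (2*real k+6*x+9))
        * wz_base x k"
    unfolding wz_term_shift wz_term_via_base[OF assms] by algebra
  also have "\<dots> = (- (real k-x-1) * (real k-3*x-4) * (2*real k+1) * wz_cert_poly x (real k+1) / 2
       - real k * (2*real k+2*x+3) * (2*real k+6*x+9) * wz_cert_poly x (real k) / 4)
        * wz_base x k"
    unfolding wz_cert_identity ..
  also have "\<dots> = wz_cert x (Suc k) - wz_cert x k"
    unfolding wz_cert_Suc[OF assms] unfolding wz_cert_def by algebra
  finally show ?thesis .
qed

lemma wz_cert_0: "wz_cert x 0 = 0"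
  by (simp add: wz_cert_def)

(* For x = n the base term, hence the certificate, vanishes from k = n+2 on, since
   (-n-1)_k = 0 there. *)
lemma wz_cert_vanishes:
  assumes "n + 2 \<le> k"
  shows "wz_cert (real n) k = 0"
proof -
  have "- real n - 1 = - real (Suc n)" by simp
  then have "pochhammer (- real n - 1) k = pochhammer (- real (Suc n)) k" by (simp only:)
  also have "\<dots> = 0" using assms by (subst pochhammer_of_nat_eq_0_iff) simp
  finally show ?thesis by (simp add: wz_cert_def wz_base_def)
qed

lemma wz_difference_sums:
  "(\<lambda>k. rec_next (real n) * wz_term (real n + 1) k - rec_curr (real n) * wz_term (real n) k)
     sums 0"
proof -
  have "wz_cert (real n) \<longlonglongrightarrow> 0"
    by (rule tendsto_eventually)
      (auto simp: eventually_sequentially intro!: exI[of _ "n + 2"] wz_cert_vanishes)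
  from telescope_sums[OF this] show ?thesis
    by (simp add: wz_recurrence wz_cert_0)
qed

(* The leading coefficient does not vanish, so the recurrence determines S(x+1). *)
lemma rec_next_pos: "x \<ge> 0 \<Longrightarrow> rec_next x > 0"
  unfolding rec_next_def by (intro mult_pos_pos zero_less_power) auto

definition closed_form :: "nat \<Rightarrow> real" where
  "closed_form n = (3^3 / 2^8) ^ n *
     (pochhammer (7/6) n * pochhammer (5/6) n * (pochhammer (3/2) n)^2)
     / (pochhammer (5/8) n * pochhammer (7/8) n * pochhammer (9/8) n * pochhammer (11/8) n)"

lemma closed_form_Suc:
  "rec_next (real n) * closed_form (Suc n) = rec_curr (real n) * closed_form n"
proof -
  have "pochhammer (5/8) n > (0::real)" "pochhammer (7/8) n > (0::real)"
    "pochhammer (9/8) n > (0::real)" "pochhammer (11/8) n > (0::real)"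
    by (auto intro!: pochhammer_pos)
  moreover have "5/8 + real n > 0" "7/8 + real n > 0" "9/8 + real n > 0" "11/8 + real n > 0"
    by linarith+
  ultimately show ?thesis
    unfolding closed_form_def rec_next_def rec_curr_def pochhammer_rec' power_Suc
    by (simp add: divide_simps) algebra
qed

(* Base case n = 0: only the k = 0 term survives, since (0)_k = 0 for k > 0. *)
lemma wz_term_0_sums: "wz_term 0 sums 1"
proof -
  have "wz_term 0 k = 0" if "k \<notin> {0}" for k
    using that by (simp add: wz_term_def pochhammer_0_left)
  then have "wz_term 0 sums wz_term 0 0"
    using sums_finite[of "{0}" "wz_term 0"] by simp
  then show ?thesis by (simp add: wz_term_def)
qed

lemma wz_term_sums: "wz_term (real n) sums closed_form n"
proof (induction n)
  case 0
  then show ?case using wz_term_0_sums by (simp add: closed_form_def)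
next
  case (Suc n)
  have "(\<lambda>k. rec_next (real n) * wz_term (real n + 1) k - rec_curr (real n) * wz_term (real n) k
          + rec_curr (real n) * wz_term (real n) k)
        sums (0 + rec_curr (real n) * closed_form n)"
    by (intro sums_add wz_difference_sums sums_mult Suc.IH)
  then have "(\<lambda>k. rec_next (real n) * wz_term (real n + 1) k)
      sums (rec_next (real n) * closed_form (Suc n))"
    by (simp add: closed_form_Suc)
  then have "wz_term (real n + 1) sums closed_form (Suc n)"
    using rec_next_pos[of "real n"] by (simp add: sums_mult_iff)
  moreover have "real (Suc n) = real n + 1" by simp
  ultimately show ?case by (simp only:)
qed

theorem theorem4:
  fixes n :: nat
  shows "(\<lambda>k. (-1) ^ k * (4 * real k + 1) *
            (pochhammer (- real n) k * pochhammer (- 3 * real n - 1) k * pochhammer (1/2) k)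
            / (fact k * pochhammer (real n + 3/2) k * pochhammer (3 * real n + 5/2) k))
         sums ((3^3 / 2^8) ^ n *
            (pochhammer (7/6) n * pochhammer (5/6) n * (pochhammer (3/2) n)^2)
            / (pochhammer (5/8) n * pochhammer (7/8) n * pochhammer (9/8) n * pochhammer (11/8) n))"
  using wz_term_sums[of n] unfolding wz_term_def[abs_def] closed_form_def .

end
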